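(* Let $\mathbf p,\mathbf q,\mathbf r,\mathbf s$ be words, $x,y$ letters, and $\mathbf w=\mathbf pxy\mathbf qx\mathbf ry\mathbf s$. If every letter occurring in $\mathbf r$ occurs at least twice in $\mathbf w$, then $\mathbf D_{15}$ satisfies the identity $\mathbf w\approx\mathbf pyx\mathbf qx\mathbf ry\mathbf s$.
   Context: Words are elements of the free monoid over a countably infinite alphabet; distinct symbols below are distinct letters. $\prod$ denotes concatenation in increasing index order; $\operatorname{var}\Sigma$ is the monoid variety defined by identities $\Sigma$. $S_N$ is the symmetric group on $\{1,\dots,N\}$, $i\tau$ the image of $i$. For $n,m,k\in\mathbb N$, $\tau\in S_{n+m+k}$: $\mathbf c_{n,m,k}[\tau]=\bigl(\prod_{i=1}^n z_it_i\bigr)xyt\bigl(\prod_{i=n+1}^{n+m} z_it_i\bigr)x\bigl(\prod_{i=1}^{n+m+k-1} z_{i\tau}y_i^2\bigr)z_{(n+m+k)\tau}y\bigl(\prod_{i=n+m+1}^{n+m+k} t_iz_i\bigr)$; $\mathbf c'_{n,m,k}[\tau]$ is obtained by swapping the first occurrences of $x$ and $y$; $\mathbf d_{n,m,k}[\tau]$, $\mathbf d'_{n,m,k}[\tau]$ are $\mathbf c_{n,m,k}[\tau]$, $\mathbf c'_{n,m,k}[\tau]$ read right to left. $\Phi_1$ is the set of all identities $\mathbf c_{n,m,k}[\tau]\approx\mathbf c'_{n,m,k}[\tau]$, $\mathbf d_{n,m,k}[\tau]\approx\mathbf d'_{n,m,k}[\tau]$. $\mathbf D_{15}=\operatorname{var}\{\Phi_1,\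 xyx\approx x^2yx,\ xyx\approx xyx^2,\ (xy)^2\approx(yx)^2\}$. *)

theory Defs
  imports Main "HOL-Combinatorics.Permutations"
begin

definition eval_word :: "('b \<Rightarrow> 'a::monoid_mult) \<Rightarrow> 'b list \<Rightarrow> 'a" where
  "eval_word f w = prod_list (map f w)"

definition sat_id :: "'a::monoid_mult itself \<Rightarrow> 'b list \<times> 'b list \<Rightarrow> bool" where
  "sat_id M uv \<longleftrightarrow> (\<forall>f::'b \<Rightarrow> 'a. eval_word f (fst uv) = eval_word f (snd uv))"

datatype letter = X | Y | T | Z nat | Tl nat | Yl nat

text \<open>The word c_{n,m,k}[tau]; the flag b selects c (b = False) or c' (b = True,
first occurrences of x and y swapped).\<close>
definition c_word :: "bool \<Rightarrow> nat \<Rightarrow> nat \<Rightarrow> nat \<Rightarrow> (nat \<Rightarrow> nat) \<Rightarrow> letter list" where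
  "c_word b n m k \<tau> =
     concat (map (\<lambda>i. [Z i, Tl i]) [1..<n+1])
     @ (if b then [Y, X] else [X, Y]) @ [T]
     @ concat (map (\<lambda>i. [Z i, Tl i]) [n+1..<n+m+1])
     @ [X]
     @ concat (map (\<lambda>i. [Z (\<tau> i), Yl i, Yl i]) [1..<n+m+k])
     @ [Z (\<tau> (n+m+k)), Y]
     @ concat (map (\<lambda>i. [Tl i, Z i]) [n+m+1..<n+m+k+1])"

definition Phi1 :: "(letter list \<times> letter list) set" where
  "Phi1 = {(c_word False n m k \<tau>, c_word True n m k \<tau>) | n m k \<tau>.
              n \<ge> 1 \<and> m \<ge> 1 \<and> k \<ge> 1 \<and> \<tau> permutes {1..n+m+k}}
        \<union> {(rev (c_word False n m k \<tau>), rev (c_word True n m k \<tau>)) | n m k \<tau>.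
              n \<ge> 1 \<and> m \<ge> 1 \<and> k \<ge> 1 \<and> \<tau> permutes {1..n+m+k}}"

definition D15_ids :: "(letter list \<times> letter list) set" where
  "D15_ids = Phi1 \<union> {([X,Y,X], [X,X,Y,X]), ([X,Y,X], [X,Y,X,X]), ([X,Y,X,Y], [Y,X,Y,X])}"

definition in_D15 :: "'a::monoid_mult itself \<Rightarrow> bool" where
  "in_D15 M \<longleftrightarrow> (\<forall>uv\<in>D15_ids. sat_id M uv)"

end

theory Submission
  imports Defs
begin

text \<open>By xyx = x^2yx and xyx = xyx^2, any letter occurring at least twice in a word may be
squared at any one of its occurrences. Squaring every letter of r turns both sides into
p xy q x r' y s and p yx q x r' y s with r' a product of squares, and these are the images
of c_{1,1,k}[id] and c'_{1,1,k}[id] under z_i := 1, t_1 := p, t := q, t_3 := s, and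
y_i := the i-th letter of r (padded by 1).\<close>

lemma eval_word_Nil [simp]: "eval_word f [] = 1"
  and eval_word_Cons [simp]: "eval_word f (a # w) = f a * eval_word f w"
  and eval_word_append [simp]: "eval_word f (u @ v) = eval_word f u * eval_word f v"
  by (simp_all add: eval_word_def)

lemma eval_word_concat: "eval_word f (concat ws) = prod_list (map (eval_word f) ws)"
  by (induction ws) simp_all

lemma prod_list_ones:
  "(\<And>i. i \<in> set xs \<Longrightarrow> h i = 1) \<Longrightarrow> prod_list (map h xs) = (1::'a::monoid_mult)"
  by (induction xs) simp_all

lemma map_nth_pred_upt: "map (\<lambda>i. h (xs ! (i - 1))) [1..<length xs + 1] = map h xs"
  by (rule nth_equalityI) (simp_all del: upt_Suc)

lemma eval_word_square_letter:
  fixes f :: "'b \<Rightarrow> 'm::monoid_mult"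
  assumes xyx_xxyx: "\<And>a b::'m. a * b * a = a * a * b * a"
    and xyx_xyxx: "\<And>a b::'m. a * b * a = a * b * a * a"
    and "c \<in> set A \<union> set B"
  shows "eval_word f (A @ c # B) = eval_word f A * (f c * f c) * eval_word f B"
proof (cases "c \<in> set A")
  case True
  then obtain A1 A2 where A: "A = A1 @ c # A2"
    by (meson split_list)
  have "eval_word f (A @ c # B) = eval_word f A1 * (f c * eval_word f A2 * f c) * eval_word f B"
    by (simp add: A mult.assoc)
  also have "\<dots> = eval_word f A1 * (f c * eval_word f A2 * f c * f c) * eval_word f B"
    by (subst xyx_xyxx[of "f c"]) (rule refl)
  also have "\<dots> = eval_word f A * (f c * f c) * eval_word f B"
    by (simp add: A mult.assoc)
  finally show ?thesis .
next
  case False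
  with assms(3) obtain B1 B2 where B: "B = B1 @ c # B2"
    by (meson UnE split_list)
  have "eval_word f (A @ c # B) = eval_word f A * (f c * eval_word f B1 * f c) * eval_word f B2"
    by (simp add: B mult.assoc)
  also have "\<dots> = eval_word f A * (f c * f c * eval_word f B1 * f c) * eval_word f B2"
    by (subst xyx_xxyx[of "f c"]) (rule refl)
  also have "\<dots> = eval_word f A * (f c * f c) * eval_word f B"
    by (simp add: B mult.assoc)
  finally show ?thesis .
qed

lemma eval_word_square_letters:
  fixes f :: "'b \<Rightarrow> 'm::monoid_mult"
  assumes xyx_xxyx: "\<And>a b::'m. a * b * a = a * a * b * a"
    and xyx_xyxx: "\<And>a b::'m. a * b * a = a * b * a * a"
    and "\<forall>c\<in>set r. count_list (A @ r @ B) c \<ge> 2"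
  shows "eval_word f (A @ r @ B) = eval_word f A * prod_list (map (\<lambda>c. f c * f c) r) * eval_word f B"
  using assms(3)
proof (induction r arbitrary: A)
  case Nil
  then show ?case by simp
next
  case (Cons c r)
  then have "count_list (A @ c # r @ B) c \<ge> 2"
    by simp
  then have "c \<in> set A \<union> set (r @ B)"
    by (cases "c \<in> set A \<union> set (r @ B)") (simp_all add: count_notin)
  then have "eval_word f (A @ c # r @ B) = eval_word f A * (f c * f c) * eval_word f (r @ B)"
    by (rule eval_word_square_letter[OF xyx_xxyx xyx_xyxx])
  also have "\<dots> = eval_word f ((A @ [c, c]) @ r @ B)"
    by (simp add: mult.assoc)
  also have "\<dots> = eval_word f (A @ [c, c]) * prod_list (map (\<lambda>c. f c * f c) r) * eval_word f B"
    using Cons by (intro Cons.IH) auto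
  finally show ?case
    by (simp add: mult.assoc)
qed

lemma eval_word_c_word:
  assumes "\<And>i. g (Z i) = 1"
  shows "eval_word g (c_word b n m k \<tau>) =
      prod_list (map (g \<circ> Tl) [1..<n+1]) * (if b then g Y * g X else g X * g Y) * g T
    * prod_list (map (g \<circ> Tl) [n+1..<n+m+1]) * g X
    * prod_list (map (\<lambda>i. g (Yl i) * g (Yl i)) [1..<n+m+k]) * g Y
    * prod_list (map (g \<circ> Tl) [n+m+1..<n+m+k+1])"
  using assms by (simp add: c_word_def eval_word_concat comp_def mult.assoc del: upt_Suc)

lemma eval_word_c_word_1_1:
  assumes "\<And>i. g (Z i) = 1"
  shows "eval_word g (c_word b 1 1 k \<tau>) =
      g (Tl 1) * (if b then g Y * g X else g X * g Y) * g T * g (Tl 2) * g X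
    * prod_list (map (\<lambda>i. g (Yl i) * g (Yl i)) [1..<k+2]) * g Y
    * prod_list (map (g \<circ> Tl) [3..<k+3])"
proof -
  have "[1..<1+1] = [1::nat]" "[1+1..<1+1+1] = [2::nat]"
    and "1 + 1 + k = k + 2" "1 + 1 + 1 = (3::nat)" "1 + 1 + k + 1 = k + 3"
    by simp_all
  with eval_word_c_word[of g b 1 1 k \<tau>] assms show ?thesis
    by (simp only: list.map prod_list.Cons prod_list.Nil comp_apply mult_1_right)
qed

lemma in_D15_eval_word:
  assumes "in_D15 TYPE('m::monoid_mult)" and "(u, v) \<in> D15_ids"
  shows "eval_word (f :: _ \<Rightarrow> 'm) u = eval_word f v"
  using assms by (auto simp: in_D15_def sat_id_def)

lemma in_D15_xyx_eq_xxyx: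
  fixes a b :: "'m::monoid_mult"
  assumes "in_D15 TYPE('m)"
  shows "a * b * a = a * a * b * a"
proof -
  let ?f = "\<lambda>l. if l = X then a else b"
  have "a * b * a = eval_word ?f [X,Y,X]"
    by (simp add: mult.assoc)
  also have "\<dots> = eval_word ?f [X,X,Y,X]"
    by (rule in_D15_eval_word[OF assms]) (simp add: D15_ids_def)
  also have "\<dots> = a * a * b * a"
    by (simp add: mult.assoc)
  finally show ?thesis .
qed

lemma in_D15_xyx_eq_xyxx:
  fixes a b :: "'m::monoid_mult"
  assumes "in_D15 TYPE('m)"
  shows "a * b * a = a * b * a * a"
proof -
  let ?f = "\<lambda>l. if l = X then a else b"
  have "a * b * a = eval_word ?f [X,Y,X]"
    by (simp add: mult.assoc)
  also have "\<dots> = eval_word ?f [X,Y,X,X]"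
    by (rule in_D15_eval_word[OF assms]) (simp add: D15_ids_def)
  also have "\<dots> = a * b * a * a"
    by (simp add: mult.assoc)
  finally show ?thesis .
qed

lemma in_D15_swap_before_squares:
  fixes a b P Q S :: "'m::monoid_mult"
  assumes "in_D15 TYPE('m)"
  shows "P * (a * b) * Q * a * prod_list (map (\<lambda>c. c * c) cs) * b * S
       = P * (b * a) * Q * a * prod_list (map (\<lambda>c. c * c) cs) * b * S"
proof -
  \<comment> \<open>k = |cs| + 1 rather than |cs|, because Phi1 requires k \<ge> 1\<close>
  define k where "k = length cs + 1"
  define g where "g l = (case l of X \<Rightarrow> a | Y \<Rightarrow> b | T \<Rightarrow> Q | Z i \<Rightarrow> 1
      | Tl i \<Rightarrow> (if i = 1 then P else if i = 3 then S else 1)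
      | Yl i \<Rightarrow> (cs @ [1, 1]) ! (i - 1))" for l
  have "(c_word False 1 1 k id, c_word True 1 1 k id) \<in> D15_ids"
    unfolding D15_ids_def Phi1_def k_def by (fastforce intro: permutes_id)
  then have swap: "eval_word g (c_word False 1 1 k id) = eval_word g (c_word True 1 1 k id)"
    by (rule in_D15_eval_word[OF assms])
  have squares: "prod_list (map (\<lambda>i. g (Yl i) * g (Yl i)) [1..<k+2])
      = prod_list (map (\<lambda>c. c * c) cs)"
    using map_nth_pred_upt[of "\<lambda>c. c * c" "cs @ [1, 1]"]
    by (simp add: g_def k_def del: upt_Suc)
  have "prod_list (map (g \<circ> Tl) [4..<k+3]) = 1"
    by (rule prod_list_ones) (simp add: g_def)
  then have suffix: "prod_list (map (g \<circ> Tl) [3..<k+3]) = S"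
    by (simp add: k_def upt_conv_Cons g_def)
  show ?thesis
    using swap eval_word_c_word_1_1[of g _ k id] squares suffix by (simp add: g_def)
qed

theorem lemma6p2:
  fixes p q r s :: "nat list" and x y :: nat
  assumes "\<forall>c\<in>set r. count_list (p @ [x, y] @ q @ [x] @ r @ [y] @ s) c \<ge> 2"
    and "in_D15 TYPE('m::monoid_mult)"
  shows "sat_id TYPE('m) (p @ [x, y] @ q @ [x] @ r @ [y] @ s, p @ [y, x] @ q @ [x] @ r @ [y] @ s)"
proof -
  note square_letters =
    eval_word_square_letters[OF in_D15_xyx_eq_xxyx[OF assms(2)] in_D15_xyx_eq_xyxx[OF assms(2)]]
  have swapped_counts: "\<forall>c\<in>set r. count_list (p @ [y, x] @ q @ [x] @ r @ [y] @ s) c \<ge> 2"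
    using assms(1) by (auto split: if_splits)
  have "eval_word f (p @ [x, y] @ q @ [x] @ r @ [y] @ s) = eval_word f (p @ [y, x] @ q @ [x] @ r @ [y] @ s)"
    for f :: "nat \<Rightarrow> 'm"
  proof -
    let ?P = "eval_word f p" and ?Q = "eval_word f q" and ?S = "eval_word f s"
      and ?R = "prod_list (map (\<lambda>c. c * c) (map f r))"
    have "eval_word f (p @ [x, y] @ q @ [x] @ r @ [y] @ s) = ?P * (f x * f y) * ?Q * f x * ?R * f y * ?S"
      using square_letters[of r "p @ [x, y] @ q @ [x]" "[y] @ s" f] assms(1)
      by (simp add: comp_def mult.assoc)
    also have "\<dots> = ?P * (f y * f x) * ?Q * f x * ?R * f y * ?S"
      by (rule in_D15_swap_before_squares[OF assms(2)])
    also have "\<dots> = eval_word f (p @ [y, x] @ q @ [x] @ r @ [y] @ s)"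
      using square_letters[of r "p @ [y, x] @ q @ [x]" "[y] @ s" f] swapped_counts
      by (simp add: comp_def mult.assoc)
    finally show ?thesis .
  qed
  then show ?thesis
    by (simp add: sat_id_def)
qed

end
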